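(* Let $p$ be an odd prime, $M$ the sub-add move matrix, and $t,k$ as in the context. (a) If $\Gamma_{M,\,p}$ has no secondary cycles, then $\Gamma_{M,\,p}$ has exactly $\frac{p^2-1}{k}$ primary cycles. (b) If $\Gamma_{M,\,p}$ has secondary cycles, then all of them have a common length $s$ for some $s\in\{t,2t\}$, and $\Gamma_{M,\,p}$ has exactly $\frac{p-1}{s}$ secondary cycles and $\frac{p^2-p}{k}$ primary cycles.
   Context: The sub-add move matrix is $M=\begin{pmatrix}1&-1\\1&1\end{pmatrix}$. $\Gamma_{M,\,p}$ is the directed graph with vertex set $\mathbb Z_p^2$ and arcs $((a,b),(a-b,a+b))$ (mod $p$; loops allowed). Let $t$ be the multiplicative order of $-4$ in $GF(p)$ and $k=4t$ (the $\mathbb Z_p$-order of $M$). A directed cycle is a cycle in the underlying undirected graph such that in the induced directed subgraph every vertex has in- and out-degree $1$; a loop is a directed $1$-cycle, a pair of opposite arcs a directed $2$-cycle. A primary cycle is a directed cycle of length $k$; a secondary cycle is a directed cycle that is neither primary nor a $1$-cycle. *)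

theory Defs
  imports "HOL-Number_Theory.Number_Theory"
begin

definition vertices :: "nat \<Rightarrow> (int \<times> int) set" where
  "vertices p = {0..<int p} \<times> {0..<int p}"

definition arc :: "nat \<Rightarrow> int \<times> int \<Rightarrow> int \<times> int \<Rightarrow> bool" where
  "arc p v w \<longleftrightarrow> v \<in> vertices p \<and>
     w = ((fst v - snd v) mod int p, (fst v + snd v) mod int p)"

text \<open>A directed cycle (given by its vertex set C): C can be traversed cyclically along arcs
  (loop for card 1, pair of opposite arcs for card 2, a cycle of the underlying graph otherwise),
  and in the subgraph induced on C every vertex has in- and out-degree 1.\<close>
definition directed_cycle :: "nat \<Rightarrow> (int \<times> int) set \<Rightarrow> bool" where
  "directed_cycle p C \<longleftrightarrow> C \<subseteq> vertices p \<and>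
     (\<exists>vs. vs \<noteq> [] \<and> distinct vs \<and> set vs = C \<and>
        (\<forall>i < length vs. arc p (vs ! i) (vs ! ((i + 1) mod length vs)))) \<and>
     (\<forall>v \<in> C. card {w \<in> C. arc p v w} = 1 \<and> card {u \<in> C. arc p u v} = 1)"

definition ord_t :: "nat \<Rightarrow> nat" where
  "ord_t p = (LEAST d::nat. 0 < d \<and> [(-4::int) ^ d = 1] (mod int p))"

definition ord_k :: "nat \<Rightarrow> nat" where
  "ord_k p = 4 * ord_t p"

definition primary_cycle :: "nat \<Rightarrow> (int \<times> int) set \<Rightarrow> bool" where
  "primary_cycle p C \<longleftrightarrow> directed_cycle p C \<and> card C = ord_k p"

definition secondary_cycle :: "nat \<Rightarrow> (int \<times> int) set \<Rightarrow> bool" where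
  "secondary_cycle p C \<longleftrightarrow> directed_cycle p C \<and> card C \<noteq> ord_k p \<and> card C \<noteq> 1"

end

theory Submission
  imports Defs
begin

text \<open>Over GF(p) the move matrix is M = 1 + J with J(a, b) = (-b, a), so M^2 = 2J and M^4 = -4:
  the power M^(4m) is the scalar (-4)^m. Hence the period of a nonzero vertex is a multiple of t
  dividing 4t, i.e. t, 2t or 4t, and since M is invertible the directed cycles of the graph are
  exactly the orbits of M. A nonzero vertex lies on a secondary cycle iff it is fixed by M^(2t).
  For even t, M^(2t) is the scalar (-4)^(t/2), which is not 1; for odd t, M^(2t) = cJ with
  c = 2(-4)^((t-1)/2) and c^2 = -(-4)^t = -1, whose nonzero fixed vectors are the p - 1 points of
  the line b = ca. As M commutes with scalars, all of them share one period s. Counting orbits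
  of uniform length among the p^2 - 1 nonzero vertices gives both formulas.\<close>

section \<open>Orbits of a periodic map\<close>

locale periodic_map =
  fixes f :: "'a \<Rightarrow> 'a" and V :: "'a set" and N :: nat
  assumes maps_to: "v \<in> V \<Longrightarrow> f v \<in> V"
    and N_pos: "0 < N"
    and funpow_N: "v \<in> V \<Longrightarrow> (f ^^ N) v = v"
begin

definition period :: "'a \<Rightarrow> nat" where
  "period v = (LEAST d. 0 < d \<and> (f ^^ d) v = v)"

definition orbit :: "'a \<Rightarrow> 'a set" where
  "orbit v = (\<lambda>n. (f ^^ n) v) ` {..<period v}"

lemma funpow_in_V: "v \<in> V \<Longrightarrow> (f ^^ n) v \<in> V"
  by (induction n) (auto intro: maps_to)

lemma period_pos: "v \<in> V \<Longrightarrow> 0 < period v"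
  and funpow_period: "v \<in> V \<Longrightarrow> (f ^^ period v) v = v"
  using LeastI[of "\<lambda>d. 0 < d \<and> (f ^^ d) v = v" N] N_pos funpow_N
  unfolding period_def by auto

lemma funpow_eq_self_iff: "v \<in> V \<Longrightarrow> (f ^^ n) v = v \<longleftrightarrow> period v dvd n"
proof
  assume v: "v \<in> V" and fix_n: "(f ^^ n) v = v"
  have "(f ^^ (n mod period v)) v = v"
    using funpow_mod_eq[OF funpow_period[OF v]] fix_n by simp
  moreover have "n mod period v < period v"
    using period_pos[OF v] by simp
  ultimately have "\<not> 0 < n mod period v"
    using not_less_Least[of "n mod period v" "\<lambda>d. 0 < d \<and> (f ^^ d) v = v"]
    unfolding period_def by auto
  then show "period v dvd n" by (simp add: dvd_eq_mod_eq_0)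
next
  assume "v \<in> V" "period v dvd n"
  then show "(f ^^ n) v = v"
    using funpow_mod_eq[OF funpow_period, of v n] by (simp add: dvd_eq_mod_eq_0)
qed

lemma period_dvd_N: "v \<in> V \<Longrightarrow> period v dvd N"
  using funpow_eq_self_iff funpow_N by blast

lemma period_eq_1_iff: "v \<in> V \<Longrightarrow> period v = 1 \<longleftrightarrow> f v = v"
  using funpow_eq_self_iff[of v 1] by auto

lemma period_cong:
  assumes "\<And>n. (f ^^ n) u = u \<longleftrightarrow> (f ^^ n) v = v"
  shows "period u = period v"
  unfolding period_def using assms by simp

lemma inj_on_funpow_period:
  assumes v: "v \<in> V"
  shows "inj_on (\<lambda>n. (f ^^ n) v) {..<period v}"
proof -
  have distinct: "(f ^^ i) v \<noteq> (f ^^ j) v" if ij: "i < j" "j < period v" for i j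
  proof
    assume "(f ^^ i) v = (f ^^ j) v"
    then have "(f ^^ (period v - j + i)) v = (f ^^ (period v - j + j)) v"
      by (simp add: funpow_add)
    also have "\<dots> = v"
      using ij funpow_period[OF v] by simp
    finally have "period v dvd period v - j + i"
      using funpow_eq_self_iff[OF v] by blast
    moreover have "0 < period v - j + i" "period v - j + i < period v"
      using ij by auto
    ultimately show False
      using nat_dvd_not_less by blast
  qed
  show ?thesis
  proof (rule inj_onI)
    fix i j assume "i \<in> {..<period v}" "j \<in> {..<period v}" "(f ^^ i) v = (f ^^ j) v"
    then show "i = j"
      using distinct[of i j] distinct[of j i] by (cases i j rule: linorder_cases) auto
  qed
qed

lemma card_orbit: "v \<in> V \<Longrightarrow> card (orbit v) = period v"
  unfolding orbit_def using inj_on_funpow_period card_image by fastforce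

lemma orbit_eq_range: "v \<in> V \<Longrightarrow> orbit v = range (\<lambda>n. (f ^^ n) v)"
  unfolding orbit_def using funpow_mod_eq[OF funpow_period] period_pos
  by (auto intro!: image_eqI[where x = "_ mod period v"])

lemma orbit_subset: "v \<in> V \<Longrightarrow> orbit v \<subseteq> V"
  using orbit_eq_range funpow_in_V by auto

lemma self_in_orbit: "v \<in> V \<Longrightarrow> v \<in> orbit v"
  using orbit_eq_range[of v] by (auto intro: range_eqI[where x = 0])

lemma orbit_funpow: 
  assumes v: "v \<in> V"
  shows "orbit ((f ^^ m) v) = orbit v"
proof -
  have "(f ^^ n) v = (f ^^ (n + period v * m - m)) ((f ^^ m) v)" for n
  proof -
    have "m \<le> period v * m"
      using period_pos[OF v] by simp
    then have "n + period v * m - m + m = n + period v * m"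
      by linarith
    then have "(f ^^ (n + period v * m - m)) ((f ^^ m) v) = (f ^^ (n + period v * m)) v"
      by (metis funpow_add o_apply)
    also have "\<dots> = (f ^^ n) v"
      using funpow_mod_eq[OF funpow_period[OF v]] by (metis mod_mult_self2)
    finally show ?thesis by simp
  qed
  moreover have "(f ^^ n) ((f ^^ m) v) = (f ^^ (n + m)) v" for n
    by (simp add: funpow_add)
  ultimately show ?thesis
    using orbit_eq_range v funpow_in_V by (auto simp del: funpow.simps)
qed

lemma orbit_eq_if_in_orbit:
  assumes v: "v \<in> V" and u: "u \<in> orbit v"
  shows "orbit u = orbit v"
proof -
  obtain n where "u = (f ^^ n) v"
    using u orbit_eq_range[OF v] by blast
  then show ?thesis
    using orbit_funpow[OF v] by simp
qed

lemma period_eq_if_in_orbit: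
  assumes v: "v \<in> V" and u: "u \<in> orbit v"
  shows "period u = period v"
proof -
  have "u \<in> V"
    using u orbit_subset[OF v] by blast
  then show ?thesis
    using card_orbit orbit_eq_if_in_orbit[OF v u] v by metis
qed

lemma card_orbits_of_period:
  assumes "finite V"
  shows "m * card (orbit ` {v \<in> V. period v = m}) = card {v \<in> V. period v = m}"
proof -
  let ?W = "{v \<in> V. period v = m}"
  have union: "\<Union> (orbit ` ?W) = ?W"
  proof
    show "\<Union> (orbit ` ?W) \<subseteq> ?W"
      using orbit_subset period_eq_if_in_orbit by fastforce
    show "?W \<subseteq> \<Union> (orbit ` ?W)"
      using self_in_orbit by fastforce
  qed
  have "m * card (orbit ` ?W) = card (\<Union> (orbit ` ?W))"
  proof (rule card_partition)
    show "finite (orbit ` ?W)" "finite (\<Union> (orbit ` ?W))"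
      using assms union by simp_all
    show "card C = m" if "C \<in> orbit ` ?W" for C
      using that card_orbit by auto
    show "C \<inter> D = {}" if "C \<in> orbit ` ?W" "D \<in> orbit ` ?W" "C \<noteq> D" for C D
    proof -
      have "orbit u = orbit v" if "u \<in> V" "v \<in> V" "w \<in> orbit u" "w \<in> orbit v" for u v w
        using orbit_eq_if_in_orbit that by metis
      with that show ?thesis
        by blast
    qed
  qed
  with union show ?thesis by simp
qed

lemma orbits_with_card:
  "{C. (\<exists>v \<in> V. C = orbit v) \<and> P (card C)} = orbit ` {v \<in> V. P (period v)}"
  using card_orbit by fastforce

lemma walk_set_eq_orbit:
  assumes "vs \<noteq> []" "distinct vs"
    and walk: "\<And>i. i < length vs \<Longrightarrow> vs ! i \<in> V \<and> vs ! ((i + 1) mod length vs) = f (vs ! i)"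
  shows "hd vs \<in> V" "set vs = orbit (hd vs)"
proof -
  define L v where "L = length vs" and "v = hd vs"
  have L_pos: "0 < L"
    using assms(1) by (simp add: L_def)
  show v: "hd vs \<in> V"
    using walk[of 0] L_pos assms(1) by (simp add: L_def hd_conv_nth)
  have nth: "vs ! i = (f ^^ i) v" if "i < L" for i
    using that
  proof (induction i)
    case 0
    then show ?case using assms(1) by (simp add: v_def hd_conv_nth)
  next
    case (Suc i)
    then show ?case using walk[of i] by (simp add: L_def)
  qed
  have "(f ^^ L) v = f (vs ! (L - 1))"
    using L_pos nth[of "L - 1"] by (cases L) simp_all
  also have "\<dots> = v"
    using walk[of "L - 1"] L_pos nth[of 0] by (simp add: L_def)
  finally have "period v dvd L"
    using funpow_eq_self_iff v v_def by blast
  then have "period v \<le> L"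
    using L_pos by (simp add: dvd_imp_le)
  have "period v = L"
  proof (rule ccontr)
    assume "period v \<noteq> L"
    with \<open>period v \<le> L\<close> have lt: "period v < L" by simp
    then have "vs ! period v = vs ! 0"
      using nth[OF lt] nth[of 0] L_pos funpow_period[OF v] v_def by simp
    then have "period v = 0"
      using nth_eq_iff_index_eq[OF assms(2)] lt L_pos L_def by simp
    then show False
      using period_pos[OF v] v_def by simp
  qed
  have "set vs = (\<lambda>i. vs ! i) ` {..<L}"
    by (auto simp: set_conv_nth L_def)
  also have "\<dots> = orbit v"
    unfolding orbit_def \<open>period v = L\<close> by (rule image_cong) (simp_all add: nth)
  finally show "set vs = orbit (hd vs)"
    by (simp add: v_def)
qed

lemma orbit_walk:
  assumes v: "v \<in> V"
  obtains vs where "vs \<noteq> []" "distinct vs" "set vs = orbit v"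
    "\<And>i. i < length vs \<Longrightarrow> vs ! i \<in> V \<and> vs ! ((i + 1) mod length vs) = f (vs ! i)"
proof (rule that)
  let ?vs = "map (\<lambda>i. (f ^^ i) v) [0..<period v]"
  show "?vs \<noteq> []" "set ?vs = orbit v"
    using period_pos[OF v] by (auto simp: orbit_def)
  show "distinct ?vs"
    using inj_on_funpow_period[OF v] by (simp add: distinct_map atLeast0LessThan)
  show "?vs ! i \<in> V \<and> ?vs ! ((i + 1) mod length ?vs) = f (?vs ! i)" if "i < length ?vs" for i
  proof
    have i: "i < period v"
      using that by simp
    then show "?vs ! i \<in> V"
      using funpow_in_V[OF v] by simp
    have "?vs ! ((i + 1) mod length ?vs) = (f ^^ ((i + 1) mod period v)) v"
      using period_pos[OF v] by simp
    also have "\<dots> = f ((f ^^ i) v)"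
      using funpow_mod_eq[OF funpow_period[OF v], of "i + 1"] by simp
    finally show "?vs ! ((i + 1) mod length ?vs) = f (?vs ! i)"
      using i by simp
  qed
qed

lemma inj_on_V: "inj_on f V"
proof (rule inj_on_inverseI)
  fix v assume "v \<in> V"
  have "(f ^^ (N - 1)) (f v) = (f ^^ Suc (N - 1)) v"
    by (simp only: funpow_Suc_right o_apply)
  also have "\<dots> = v"
    using N_pos funpow_N[OF \<open>v \<in> V\<close>] by simp
  finally show "(f ^^ (N - 1)) (f v) = v" .
qed

lemma orbit_successors:
  assumes v: "v \<in> V" and x: "x \<in> orbit v"
  shows "{w \<in> orbit v. w = f x} = {f x}"
proof -
  obtain n where "x = (f ^^ n) v"
    using x orbit_eq_range[OF v] by blast
  then have "f x = (f ^^ Suc n) v"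
    by simp
  then have "f x \<in> orbit v"
    using orbit_eq_range[OF v] by (metis rangeI)
  then show ?thesis
    by blast
qed

lemma orbit_predecessors:
  assumes v: "v \<in> V" and x: "x \<in> orbit v"
  shows "{u \<in> orbit v. u \<in> V \<and> x = f u} = {(f ^^ (period v - 1)) x}"
proof -
  have xV: "x \<in> V"
    using x orbit_subset[OF v] by blast
  define u where "u = (f ^^ (period v - 1)) x"
  have "f u = (f ^^ Suc (period v - 1)) x"
    by (simp add: u_def)
  also have "\<dots> = x"
    using funpow_period[OF xV] period_pos[OF v] period_eq_if_in_orbit[OF v x] by simp
  finally have fu: "f u = x" .
  have u: "u \<in> orbit v"
    using orbit_eq_if_in_orbit[OF v x] orbit_eq_range[OF xV] by (auto simp: u_def)
  have uV: "u \<in> V"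
    using u orbit_subset[OF v] by blast
  have "{w \<in> orbit v. w \<in> V \<and> x = f w} = {u}"
  proof (intro equalityI subsetI)
    fix w assume "w \<in> {w \<in> orbit v. w \<in> V \<and> x = f w}"
    then have "w \<in> V" "f w = f u"
      using fu by auto
    then show "w \<in> {u}"
      using inj_onD[OF inj_on_V _ _ uV] by simp
  qed (use u uV fu in simp)
  then show ?thesis
    by (simp add: u_def)
qed

lemma cycle_iff_orbit:
  assumes arc_iff: "\<And>v w. R v w \<longleftrightarrow> v \<in> V \<and> w = f v"
  shows "(C \<subseteq> V \<and>
      (\<exists>vs. vs \<noteq> [] \<and> distinct vs \<and> set vs = C \<and>
        (\<forall>i < length vs. R (vs ! i) (vs ! ((i + 1) mod length vs)))) \<and>
      (\<forall>v \<in> C. card {w \<in> C. R v w} = 1 \<and> card {u \<in> C. R u v} = 1))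
    \<longleftrightarrow> (\<exists>v \<in> V. C = orbit v)" (is "?cycle \<longleftrightarrow> _")
proof
  assume ?cycle
  then have "\<exists>vs. vs \<noteq> [] \<and> distinct vs \<and> set vs = C \<and>
      (\<forall>i < length vs. R (vs ! i) (vs ! ((i + 1) mod length vs)))"
    by (rule conjunct1[OF conjunct2])
  then obtain vs where vs: "vs \<noteq> []" "distinct vs" "set vs = C"
    and walk: "\<forall>i < length vs. R (vs ! i) (vs ! ((i + 1) mod length vs))"
    by blast
  have "\<And>i. i < length vs \<Longrightarrow> vs ! i \<in> V \<and> vs ! ((i + 1) mod length vs) = f (vs ! i)"
    using walk by (simp add: arc_iff)
  note walk_set_eq_orbit[OF vs(1,2) this]
  with vs(3) show "\<exists>v \<in> V. C = orbit v"
    by blast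
next
  assume "\<exists>v \<in> V. C = orbit v"
  then obtain v where v: "v \<in> V" and C: "C = orbit v" ..
  obtain vs where vs: "vs \<noteq> []" "distinct vs" "set vs = orbit v"
    and walk: "\<And>i. i < length vs \<Longrightarrow> vs ! i \<in> V \<and> vs ! ((i + 1) mod length vs) = f (vs ! i)"
    using orbit_walk[OF v] by blast
  show ?cycle
  proof (intro conjI)
    show "C \<subseteq> V"
      using orbit_subset[OF v] C by simp
    show "\<exists>vs. vs \<noteq> [] \<and> distinct vs \<and> set vs = C \<and>
        (\<forall>i < length vs. R (vs ! i) (vs ! ((i + 1) mod length vs)))"
      using vs walk by (intro exI[of _ vs]) (simp add: arc_iff C)
    show "\<forall>x \<in> C. card {w \<in> C. R x w} = 1 \<and> card {u \<in> C. R u x} = 1"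
    proof
      fix x assume x: "x \<in> C"
      then have "x \<in> V"
        using C orbit_subset[OF v] by blast
      then have "{w \<in> C. R x w} = {f x}" "{u \<in> C. R u x} = {(f ^^ (period v - 1)) x}"
        using orbit_successors[OF v] orbit_predecessors[OF v] x unfolding arc_iff C by auto
      then show "card {w \<in> C. R x w} = 1 \<and> card {u \<in> C. R u x} = 1"
        by simp
    qed
  qed
qed

end

section \<open>The sub-add move over the integers and modulo p\<close>

definition sub_add :: "int \<times> int \<Rightarrow> int \<times> int" where
  "sub_add v = (fst v - snd v, fst v + snd v)"

definition scale :: "int \<Rightarrow> int \<times> int \<Rightarrow> int \<times> int" where
  "scale c v = (c * fst v, c * snd v)"

definition reduce :: "nat \<Rightarrow> int \<times> int \<Rightarrow> int \<times> int" where
  "reduce p v = (fst v mod int p, snd v mod int p)"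

definition sub_add_move :: "nat \<Rightarrow> int \<times> int \<Rightarrow> int \<times> int" where
  "sub_add_move p v = reduce p (sub_add v)"

lemma arc_iff: "arc p v w \<longleftrightarrow> v \<in> vertices p \<and> w = sub_add_move p v"
  by (simp add: arc_def sub_add_move_def reduce_def sub_add_def)

lemma finite_vertices: "finite (vertices p)"
  by (simp add: vertices_def)

lemma reduce_vertex: "v \<in> vertices p \<Longrightarrow> reduce p v = v"
  by (auto simp: reduce_def vertices_def)

lemma reduce_in_vertices: "0 < p \<Longrightarrow> reduce p v \<in> vertices p"
  by (simp add: reduce_def vertices_def)

lemma reduce_eq_iff:
  "reduce p v = reduce p w \<longleftrightarrow> [fst v = fst w] (mod int p) \<and> [snd v = snd w] (mod int p)"
  by (simp add: reduce_def cong_def)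

lemma reduce_sub_add_reduce: "reduce p (sub_add (reduce p v)) = reduce p (sub_add v)"
  by (simp add: reduce_def sub_add_def mod_diff_eq mod_add_eq)

lemma funpow_sub_add_move: "(sub_add_move p ^^ n) (reduce p v) = reduce p ((sub_add ^^ n) v)"
proof (induction n)
  case (Suc n)
  then show ?case
    by (simp add: sub_add_move_def reduce_sub_add_reduce)
qed simp

lemma funpow_sub_add_scale: "(sub_add ^^ n) (scale c v) = scale c ((sub_add ^^ n) v)"
  by (induction n) (simp_all add: sub_add_def scale_def algebra_simps)

lemma funpow_sub_add_two: "(sub_add ^^ 2) v = scale 2 (- snd v, fst v)"
  by (simp add: numeral_2_eq_2 sub_add_def scale_def)

lemma funpow_sub_add_four: "(sub_add ^^ 4) v = scale (-4) v"
  by (simp add: numeral_eq_Suc sub_add_def scale_def algebra_simps)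

lemma funpow_sub_add_four_mult: "(sub_add ^^ (4 * m)) v = scale ((-4) ^ m) v"
proof -
  have "((sub_add ^^ 4) ^^ m) v = scale ((-4) ^ m) v"
    by (induction m) (simp_all add: funpow_sub_add_four scale_def)
  then show ?thesis
    by (simp add: funpow_mult)
qed

lemma reduce_scale_cancel:
  assumes "prime p" "\<not> int p dvd c"
  shows "reduce p (scale c v) = reduce p (scale c w) \<longleftrightarrow> reduce p v = reduce p w"
proof -
  have "coprime c (int p)"
    using assms prime_imp_coprime[of "int p" c] by (simp add: coprime_commute)
  then show ?thesis
    by (simp add: reduce_eq_iff scale_def cong_mult_lcancel)
qed

lemma reduce_scale_eq_self_iff:
  assumes "prime p"
  shows "reduce p (scale c v) = reduce p v \<longleftrightarrow> reduce p v = (0, 0) \<or> [c = 1] (mod int p)"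
proof (cases "reduce p v = (0, 0)")
  case True
  then show ?thesis
    by (simp add: reduce_def scale_def mod_mult_right_eq[symmetric, of c])
next
  case False
  then obtain x where x: "x = fst v \<or> x = snd v" "\<not> int p dvd x"
    by (auto simp: reduce_def dvd_eq_mod_eq_0)
  then have "coprime x (int p)"
    using assms prime_imp_coprime[of "int p" x] by (simp add: coprime_commute)
  then have "[c * x = x] (mod int p) \<longleftrightarrow> [c = 1] (mod int p)"
    using cong_mult_rcancel[of x "int p" c 1] by simp
  with x False show ?thesis
    by (auto simp: reduce_eq_iff scale_def intro: cong_scalar_right[of c 1, simplified])
qed

lemma scale_scale: "scale a (scale b v) = scale (a * b) v"
  by (simp add: scale_def)

lemma reduce_scale_reduce: "reduce p (scale a (reduce p v)) = reduce p (scale a v)"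
  by (simp add: reduce_def scale_def mod_mult_right_eq)

section \<open>Periods of the sub-add move\<close>

lemma nat_neg4_mod_pow_cong_one_iff:
  assumes "0 < p"
  shows "[nat ((-4) mod int p) ^ d = 1] (mod p) \<longleftrightarrow> [(-4::int) ^ d = 1] (mod int p)"
proof -
  have "[nat ((-4) mod int p) ^ d = 1] (mod p) \<longleftrightarrow> [((-4) mod int p) ^ d = 1] (mod int p)"
    using assms by (simp flip: cong_int_iff)
  also have "\<dots> \<longleftrightarrow> [(-4::int) ^ d = 1] (mod int p)"
    by (simp add: cong_def power_mod)
  finally show ?thesis .
qed

locale sub_add_graph =
  fixes p :: nat
  assumes prime_p: "prime p" and odd_p: "odd p"
begin

abbreviation t :: nat where "t \<equiv> ord_t p"

lemma p_gt_2: "2 < p"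
  using prime_ge_2_nat[OF prime_p] odd_p by (cases "p = 2") auto

lemma coprime_neg4: "coprime p (nat ((-4) mod int p))"
proof (rule prime_imp_coprime[OF prime_p], rule notI)
  assume "p dvd nat ((-4) mod int p)"
  then have "int p dvd (-4) mod int p"
    using p_gt_2 by (simp flip: int_dvd_int_iff)
  then have "int p dvd int (2 * 2)"
    by (simp add: dvd_mod_iff)
  then have "p dvd 2 * 2"
    by (simp only: int_dvd_int_iff)
  then have "p dvd 2"
    using prime_dvd_mult_iff[OF prime_p] by blast
  then show False
    using p_gt_2 by (simp add: nat_dvd_not_less)
qed

lemma ord_t_eq_ord: "t = ord p (nat ((-4) mod int p))"
  unfolding ord_t_def ord_def
  using nat_neg4_mod_pow_cong_one_iff[of p] coprime_neg4 p_gt_2 by simp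

lemma ord_t_pos: "0 < t"
  using coprime_neg4 by (simp add: ord_t_eq_ord)

lemma neg4_pow_cong_one_iff: "[(-4::int) ^ d = 1] (mod int p) \<longleftrightarrow> t dvd d"
proof -
  have "[(-4::int) ^ d = 1] (mod int p) \<longleftrightarrow> [nat ((-4) mod int p) ^ d = 1] (mod p)"
    by (rule nat_neg4_mod_pow_cong_one_iff[symmetric]) (use p_gt_2 in simp)
  also have "\<dots> \<longleftrightarrow> t dvd d"
    unfolding ord_t_eq_ord by (rule ord_divides)
  finally show ?thesis .
qed

lemma funpow_four_mult_eq_self_iff:
  assumes "v \<in> vertices p"
  shows "(sub_add_move p ^^ (4 * m)) v = v \<longleftrightarrow> v = (0, 0) \<or> t dvd m"
proof -
  have "(sub_add_move p ^^ (4 * m)) v = reduce p (scale ((-4) ^ m) v)"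
    using funpow_sub_add_move[where p = p and n = "4 * m" and v = v] reduce_vertex[OF assms]
    by (simp add: funpow_sub_add_four_mult)
  moreover have "reduce p (scale ((-4) ^ m) v) = reduce p v \<longleftrightarrow>
      reduce p v = (0, 0) \<or> [(-4) ^ m = 1] (mod int p)"
    by (rule reduce_scale_eq_self_iff[OF prime_p])
  ultimately show ?thesis
    using reduce_vertex[OF assms] by (simp add: neg4_pow_cong_one_iff)
qed

sublocale periodic_map "sub_add_move p" "vertices p" "4 * t"
proof
  show "sub_add_move p v \<in> vertices p" for v
    using p_gt_2 by (simp add: sub_add_move_def reduce_in_vertices)
  show "0 < 4 * t"
    using ord_t_pos by simp
  show "(sub_add_move p ^^ (4 * t)) v = v" if "v \<in> vertices p" for v
    using funpow_four_mult_eq_self_iff[OF that] by simp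
qed

lemma fixed_point_eq_zero:
  assumes v: "v \<in> vertices p" and fixed: "sub_add_move p v = v"
  shows "v = (0, 0)"
proof -
  obtain a b where ab: "v = (a, b)"
    by (cases v)
  have range: "0 \<le> a" "a < int p" "0 \<le> b" "b < int p"
    using v by (auto simp: ab vertices_def)
  have "reduce p (a - b, a + b) = reduce p (a, b)"
    using fixed reduce_vertex[OF v] by (simp add: ab sub_add_move_def sub_add_def)
  then have "[a - b = a] (mod int p)" "[a + b = b] (mod int p)"
    by (simp_all add: reduce_eq_iff)
  then have "int p dvd b" "int p dvd a"
    by (simp_all add: cong_iff_dvd_diff)
  with range have "a = 0" "b = 0"
    by (simp_all add: dvd_eq_mod_eq_0)
  then show ?thesis
    by (simp add: ab)
qed

lemma period_eq_1_iff_zero: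
  assumes v: "v \<in> vertices p"
  shows "period v = 1 \<longleftrightarrow> v = (0, 0)"
proof -
  have "sub_add_move p (0, 0) = (0, 0)"
    by (simp add: sub_add_move_def sub_add_def reduce_def)
  then show ?thesis
    using period_eq_1_iff[OF v] fixed_point_eq_zero[OF v] by blast
qed

lemma ord_t_dvd_period:
  assumes "v \<in> vertices p" "v \<noteq> (0, 0)"
  shows "t dvd period v"
proof -
  have "(sub_add_move p ^^ (4 * period v)) v = v"
    using funpow_eq_self_iff[OF assms(1)] by simp
  then show ?thesis
    using funpow_four_mult_eq_self_iff[OF assms(1)] assms(2) by simp
qed

lemma period_cases:
  assumes "v \<in> vertices p" "v \<noteq> (0, 0)"
  shows "period v = t \<or> period v = 2 * t \<or> period v = 4 * t"
proof -
  obtain e where e: "period v = t * e"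
    using ord_t_dvd_period[OF assms] by blast
  have "t * e dvd t * 4"
    using period_dvd_N[OF assms(1)] by (simp add: e mult.commute)
  then have "e dvd 4"
    using ord_t_pos by simp
  have "e \<le> 4"
    using \<open>e dvd 4\<close> by (simp add: dvd_imp_le)
  moreover have "e \<noteq> 0" "e \<noteq> 3"
    using \<open>e dvd 4\<close> by (intro notI, simp)+
  ultimately have "e = 1 \<or> e = 2 \<or> e = 4"
    by linarith
  then show ?thesis
    using e by auto
qed

definition secondary_vertices :: "(int \<times> int) set" where
  "secondary_vertices = {v \<in> vertices p. period v \<noteq> 1 \<and> period v \<noteq> 4 * t}"

lemma secondary_vertices_iff:
  "v \<in> secondary_vertices \<longleftrightarrow>
     v \<in> vertices p \<and> v \<noteq> (0, 0) \<and> (sub_add_move p ^^ (2 * t)) v = v"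
proof (cases "v \<in> vertices p \<and> v \<noteq> (0, 0)")
  case True
  then have "period v \<noteq> 4 * t \<longleftrightarrow> period v dvd 2 * t"
    using period_cases[of v] ord_t_pos by auto
  then show ?thesis
    using True period_eq_1_iff_zero funpow_eq_self_iff by (auto simp: secondary_vertices_def)
next
  case False
  have "(0, 0) \<in> vertices p"
    using p_gt_2 by (simp add: vertices_def)
  then have "period (0, 0) = 1"
    using period_eq_1_iff_zero by blast
  with False show ?thesis
    by (auto simp: secondary_vertices_def)
qed

lemma secondary_vertices_empty_if_even:
  assumes "even t"
  shows "secondary_vertices = {}"
proof (rule ccontr)
  assume "secondary_vertices \<noteq> {}"
  then obtain v where "v \<in> secondary_vertices"
    by blast
  moreover have "2 * t = 4 * (t div 2)"
    using assms by simp
  ultimately have "v \<in> vertices p" "v \<noteq> (0, 0)" "(sub_add_move p ^^ (4 * (t div 2))) v = v"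
    using secondary_vertices_iff by auto
  then have "t dvd t div 2"
    using funpow_four_mult_eq_self_iff by blast
  moreover have "0 < t div 2" "t div 2 < t"
    using assms ord_t_pos by auto
  ultimately show False
    using nat_dvd_not_less by blast
qed

lemma period_reduce_scale:
  assumes v: "v \<in> vertices p" and a: "\<not> int p dvd a"
  shows "period (reduce p (scale a v)) = period v"
proof (rule period_cong)
  fix n
  have "(sub_add_move p ^^ n) (reduce p (scale a v)) = reduce p (scale a ((sub_add ^^ n) v))"
    by (simp add: funpow_sub_add_move funpow_sub_add_scale)
  moreover have "(sub_add_move p ^^ n) v = reduce p ((sub_add ^^ n) v)"
    using funpow_sub_add_move[where p = p and n = n and v = v] reduce_vertex[OF v] by simp
  ultimately show "(sub_add_move p ^^ n) (reduce p (scale a v)) = reduce p (scale a v) \<longleftrightarrow>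
      (sub_add_move p ^^ n) v = v"
    using reduce_scale_cancel[OF prime_p a] reduce_vertex[OF v] by metis
qed

text \<open>Meaningful only for odd t, where it is a square root of -1 modulo p.\<close>

definition sqrt_minus_one :: int where
  "sqrt_minus_one = 2 * (-4) ^ (t div 2)"

lemma sqrt_minus_one_squared:
  assumes "odd t"
  shows "[sqrt_minus_one * sqrt_minus_one = -1] (mod int p)"
proof -
  obtain j where t: "t = 2 * j + 1"
    using assms oddE by blast
  have "sqrt_minus_one * sqrt_minus_one = 4 * ((-4) ^ j * (-4) ^ j)"
    by (simp add: sqrt_minus_one_def t)
  also have "\<dots> = - ((-4) ^ t)"
    by (simp add: t mult_2 power_add)
  finally have "sqrt_minus_one * sqrt_minus_one = - ((-4) ^ t)" .
  moreover have "[- ((-4::int) ^ t) = - 1] (mod int p)"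
    using neg4_pow_cong_one_iff[of t] by (simp add: cong_minus_minus_iff)
  ultimately show ?thesis
    by simp
qed

lemma funpow_two_ord_t:
  assumes "odd t" "v \<in> vertices p"
  shows "(sub_add_move p ^^ (2 * t)) v = reduce p (scale sqrt_minus_one (- snd v, fst v))"
proof -
  have "2 * t = 4 * (t div 2) + 2"
    using assms(1) by presburger
  then have "(sub_add ^^ (2 * t)) v = scale ((-4) ^ (t div 2)) (scale 2 (- snd v, fst v))"
    by (simp only: funpow_add o_apply funpow_sub_add_four_mult funpow_sub_add_two)
  then show ?thesis
    using funpow_sub_add_move[where p = p and n = "2 * t" and v = v] reduce_vertex[OF assms(2)]
    by (simp add: scale_scale sqrt_minus_one_def mult.commute)
qed

lemma funpow_two_ord_t_eq_self_iff:
  assumes "odd t" "(a, b) \<in> vertices p"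
  shows "(sub_add_move p ^^ (2 * t)) (a, b) = (a, b) \<longleftrightarrow> [b = sqrt_minus_one * a] (mod int p)"
proof -
  let ?c = sqrt_minus_one
  have "(sub_add_move p ^^ (2 * t)) (a, b) = (a, b) \<longleftrightarrow>
      reduce p (- (?c * b), ?c * a) = reduce p (a, b)"
    using funpow_two_ord_t[OF assms] reduce_vertex[OF assms(2)] by (simp add: scale_def)
  also have "\<dots> \<longleftrightarrow> [- (?c * b) = a] (mod int p) \<and> [?c * a = b] (mod int p)"
    by (simp add: reduce_eq_iff)
  finally have "(sub_add_move p ^^ (2 * t)) (a, b) = (a, b) \<longleftrightarrow>
      [- (?c * b) = a] (mod int p) \<and> [?c * a = b] (mod int p)" .
  moreover have "[- (?c * b) = a] (mod int p)" if "[?c * a = b] (mod int p)"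
  proof -
    have "- (?c * b) - a = ?c * (?c * a - b) - (?c * ?c - (-1)) * a"
      by (simp add: algebra_simps)
    moreover have "int p dvd ?c * a - b" "int p dvd ?c * ?c - (-1)"
      using that sqrt_minus_one_squared[OF assms(1)] by (simp_all only: cong_iff_dvd_diff)
    ultimately show ?thesis
      by (simp add: cong_iff_dvd_diff)
  qed
  ultimately show ?thesis
    by (auto simp: cong_sym_eq)
qed

lemma secondary_vertices_odd:
  assumes "odd t"
  shows "secondary_vertices = (\<lambda>a. reduce p (scale a (1, sqrt_minus_one))) ` {1..<int p}"
proof (intro equalityI subsetI)
  fix v assume "v \<in> secondary_vertices"
  then obtain a b where v: "v = (a, b)" "(a, b) \<in> vertices p" "(a, b) \<noteq> (0, 0)"
    and "(sub_add_move p ^^ (2 * t)) (a, b) = (a, b)"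
    by (cases v) (auto simp: secondary_vertices_iff)
  then have "[b = sqrt_minus_one * a] (mod int p)"
    using funpow_two_ord_t_eq_self_iff[OF assms] by blast
  then have b: "b = (a * sqrt_minus_one) mod int p"
    using v(2) by (simp add: vertices_def cong_def mult.commute)
  then have "a \<noteq> 0"
    using v(3) by auto
  with v(2) have "a \<in> {1..<int p}"
    by (simp add: vertices_def)
  moreover have "v = reduce p (scale a (1, sqrt_minus_one))"
    using v(1,2) b by (simp add: reduce_def scale_def vertices_def)
  ultimately show "v \<in> (\<lambda>a. reduce p (scale a (1, sqrt_minus_one))) ` {1..<int p}"
    by blast
next
  fix v assume "v \<in> (\<lambda>a. reduce p (scale a (1, sqrt_minus_one))) ` {1..<int p}"
  then obtain a where a: "a \<in> {1..<int p}" and "v = (a, (a * sqrt_minus_one) mod int p)"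
    by (auto simp: reduce_def scale_def)
  moreover have "(a, (a * sqrt_minus_one) mod int p) \<in> vertices p"
    using a by (simp add: vertices_def)
  ultimately show "v \<in> secondary_vertices"
    using funpow_two_ord_t_eq_self_iff[OF assms]
    by (auto simp: secondary_vertices_iff cong_def mult.commute)
qed

lemma card_secondary_vertices_odd:
  assumes "odd t"
  shows "card secondary_vertices = p - 1"
proof -
  have "inj_on (\<lambda>a. reduce p (scale a (1, sqrt_minus_one))) {1..<int p}"
    by (rule inj_onI) (auto simp: reduce_def scale_def)
  then show ?thesis
    by (simp add: secondary_vertices_odd[OF assms] card_image)
qed

lemma secondary_vertices_eq_period:
  assumes "secondary_vertices \<noteq> {}"
  obtains s where "s \<in> {t, 2 * t}" "secondary_vertices = {v \<in> vertices p. period v = s}"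
proof -
  have odd: "odd t"
    using assms secondary_vertices_empty_if_even by blast
  let ?w = "reduce p (1, sqrt_minus_one)"
  have "?w = reduce p (scale 1 (1, sqrt_minus_one))" "1 \<in> {1..<int p}"
    using p_gt_2 by (simp_all add: scale_def)
  then have w: "?w \<in> secondary_vertices"
    unfolding secondary_vertices_odd[OF odd] by blast
  then have w_vertex: "?w \<in> vertices p" "?w \<noteq> (0, 0)"
    by (simp_all add: secondary_vertices_iff)
  have uniform: "period v = period ?w" if v: "v \<in> secondary_vertices" for v
  proof -
    obtain a where a: "a \<in> {1..<int p}" and "v = reduce p (scale a (1, sqrt_minus_one))"
      using v unfolding secondary_vertices_odd[OF odd] by (rule imageE)
    then have "v = reduce p (scale a ?w)"
      by (simp add: reduce_scale_reduce)
    moreover have "\<not> int p dvd a"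
      using a by (auto simp: zdvd_not_zless)
    ultimately show ?thesis
      using period_reduce_scale[OF w_vertex(1)] by simp
  qed
  show ?thesis
  proof (rule that)
    have "period ?w \<noteq> 4 * t"
      using w by (simp add: secondary_vertices_def)
    then show "period ?w \<in> {t, 2 * t}"
      using period_cases[OF w_vertex] by simp
    show "secondary_vertices = {v \<in> vertices p. period v = period ?w}"
    proof (intro equalityI subsetI)
      fix v assume "v \<in> secondary_vertices"
      then show "v \<in> {v \<in> vertices p. period v = period ?w}"
        using uniform by (simp add: secondary_vertices_iff)
    next
      fix v assume "v \<in> {v \<in> vertices p. period v = period ?w}"
      then show "v \<in> secondary_vertices"
        using w unfolding secondary_vertices_def by simp
    qed
  qed
qed

lemma card_primary_vertices:
  "card {v \<in> vertices p. period v = 4 * t} = p\<^sup>2 - 1 - card secondary_vertices"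
proof -
  have zero: "(0, 0) \<in> vertices p" "period (0, 0) = 1"
    using p_gt_2 period_eq_1_iff_zero by (auto simp: vertices_def)
  have "period v = 4 * t \<longleftrightarrow> v \<notin> insert (0, 0) secondary_vertices" if "v \<in> vertices p" for v
    using that period_eq_1_iff_zero[OF that] ord_t_pos by (auto simp: secondary_vertices_def)
  then have "{v \<in> vertices p. period v = 4 * t} = vertices p - insert (0, 0) secondary_vertices"
    by blast
  moreover have "card (vertices p - insert (0, 0) secondary_vertices) =
      card (vertices p) - card (insert (0, 0) secondary_vertices)"
    using zero by (intro card_Diff_subset) (auto simp: vertices_def secondary_vertices_def)
  moreover have "finite secondary_vertices"
    using finite_vertices by (simp add: secondary_vertices_def)
  then have "card (insert (0, 0) secondary_vertices) = card secondary_vertices + 1"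
    using zero by (simp add: secondary_vertices_def)
  moreover have "card (vertices p) = p\<^sup>2"
    by (simp add: vertices_def power2_eq_square)
  ultimately show ?thesis
    by simp
qed

lemma directed_cycle_iff_orbit: "directed_cycle p C \<longleftrightarrow> (\<exists>v \<in> vertices p. C = orbit v)"
  unfolding directed_cycle_def by (rule cycle_iff_orbit) (rule arc_iff)

lemma primary_cycles: "{C. primary_cycle p C} = orbit ` {v \<in> vertices p. period v = 4 * t}"
  unfolding primary_cycle_def directed_cycle_iff_orbit ord_k_def by (rule orbits_with_card)

lemma secondary_cycles: "{C. secondary_cycle p C} = orbit ` secondary_vertices"
  unfolding secondary_cycle_def directed_cycle_iff_orbit ord_k_def secondary_vertices_def
  using orbits_with_card[of "\<lambda>n. n \<noteq> 4 * t \<and> n \<noteq> 1"] by (simp add: conj_commute)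


lemma exists_secondary_cycle_iff: "(\<exists>C. secondary_cycle p C) \<longleftrightarrow> secondary_vertices \<noteq> {}"
  using secondary_cycles by blast

lemma count_primary_cycles:
  "ord_k p * card {C. primary_cycle p C} = p\<^sup>2 - 1 - card secondary_vertices"
  using card_orbits_of_period[OF finite_vertices, of "4 * t"]
  by (simp add: ord_k_def primary_cycles card_primary_vertices)

lemma count_secondary_cycles:
  assumes "secondary_vertices \<noteq> {}"
  obtains s where "s \<in> {t, 2 * t}" "\<And>C. secondary_cycle p C \<Longrightarrow> card C = s"
    "s * card {C. secondary_cycle p C} = p - 1" "card secondary_vertices = p - 1"
proof -
  obtain s where s: "s \<in> {t, 2 * t}" and S: "secondary_vertices = {v \<in> vertices p. period v = s}"
    using secondary_vertices_eq_period[OF assms] .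
  have card_S: "card secondary_vertices = p - 1"
    using assms secondary_vertices_empty_if_even card_secondary_vertices_odd by blast
  show ?thesis
  proof (rule that[OF s _ _ card_S])
    show "card C = s" if "secondary_cycle p C" for C
    proof -
      have "C \<in> orbit ` {v \<in> vertices p. period v = s}"
        using that secondary_cycles S by blast
      then show ?thesis
        using card_orbit by auto
    qed
    show "s * card {C. secondary_cycle p C} = p - 1"
      using card_orbits_of_period[OF finite_vertices, of s] S card_S secondary_cycles by simp
  qed
qed

end

lemma real_of_nat_eq_divide: "k * n = m \<Longrightarrow> 0 < k \<Longrightarrow> real n = real m / real k"
  by (simp add: field_simps flip: of_nat_mult)

theorem proposition7p6:
  fixes p :: nat
  assumes "prime p" and "odd p"
  shows "(\<not> (\<exists>C. secondary_cycle p C) \<longrightarrow>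
            real (card {C. primary_cycle p C}) = (real p ^ 2 - 1) / real (ord_k p))
       \<and> ((\<exists>C. secondary_cycle p C) \<longrightarrow>
            (\<exists>s \<in> {ord_t p, 2 * ord_t p}.
               (\<forall>C. secondary_cycle p C \<longrightarrow> card C = s) \<and>
               real (card {C. secondary_cycle p C}) = (real p - 1) / real s \<and>
               real (card {C. primary_cycle p C}) = (real p ^ 2 - real p) / real (ord_k p)))"
proof -
  interpret sub_add_graph p
    using assms by unfold_locales
  have k_pos: "0 < ord_k p"
    using ord_t_pos by (simp add: ord_k_def)
  have "1 \<le> p" "p \<le> p\<^sup>2"
    using p_gt_2 by (simp_all add: power2_eq_square)
  then have real_p: "real (p\<^sup>2 - 1) = real p ^ 2 - 1" "real (p - 1) = real p - 1"
      "real (p\<^sup>2 - 1 - (p - 1)) = real p ^ 2 - real p"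
    by (simp_all add: of_nat_diff)
  show ?thesis
  proof (intro conjI impI)
    assume "\<not> (\<exists>C. secondary_cycle p C)"
    then show "real (card {C. primary_cycle p C}) = (real p ^ 2 - 1) / real (ord_k p)"
      using real_of_nat_eq_divide[OF count_primary_cycles k_pos] real_p
      by (simp add: exists_secondary_cycle_iff)
  next
    assume "\<exists>C. secondary_cycle p C"
    then obtain s where s: "s \<in> {t, 2 * t}" "\<And>C. secondary_cycle p C \<Longrightarrow> card C = s"
      and count: "s * card {C. secondary_cycle p C} = p - 1" "card secondary_vertices = p - 1"
      using count_secondary_cycles exists_secondary_cycle_iff by metis
    moreover have "0 < s"
      using s(1) ord_t_pos by auto
    ultimately show "\<exists>s \<in> {t, 2 * t}. (\<forall>C. secondary_cycle p C \<longrightarrow> card C = s) \<and>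
        real (card {C. secondary_cycle p C}) = (real p - 1) / real s \<and>
        real (card {C. primary_cycle p C}) = (real p ^ 2 - real p) / real (ord_k p)"
      using real_of_nat_eq_divide[OF count(1)] real_of_nat_eq_divide[OF count_primary_cycles k_pos]
        real_p by auto
  qed
qed

end
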